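(* Let $G=(V,v,E)$ be a directed graph with node set $V=\{1,\dots,n\}$, target node $v\in V$ and edge set $E$, and let $Z$ be a set of ordered pairs of nodes (hidden edges) with $Z\cap E=\emptyset$. For $\mathbf{y}\in\{0,1\}^{Z}$ with support $Y=\{(i,j)\in Z: y_{(i,j)}=1\}$, let $\mathcal{FR}(\mathbf{y})$ denote the expected first return time to $v$ of the PageRank random walk on the graph $(V,E\cup Y)$. Let $\mathcal{Y}$ be a set of constraints on $\mathbf{y}$ with $\mathcal{Y}\cap\{0,1\}^{Z}\neq\emptyset$. For disjoint $S,N\subseteq Z$ let $$\gamma(S,N)=\min\{\mathcal{FR}(\mathbf{y}): y_{(i,j)}=1\ \forall (i,j)\in S,\ y_{(i,j)}=0\ \forall (i,j)\in N,\ \mathbf{y}\in\{0,1\}^{Z}\}.$$ Let $\bar{\mathbf{y}}\in\mathcal{Y}\cap\{0,1\}^{Z}$ with support $\bar Y$. Then the inequality $$\theta\ \ge\ \mathcal{FR}(\bar{\mathbf{y}})+\sum_{(i,j)\in\bar Y}\min\{0,\gamma(\emptyset,\{(i,j)\})-\mathcal{FR}(\bar{\mathbf{y}})\}(1-y_{(i,j)})+\sum_{(i,j)\in Z\setminus\bar Y}\min\{0,\gamma(\{(i,j)\},\emptyset)-\mathcal{FR}(\bar{\mathbf{y}})\}\,y_{(i,j)}$$ is valid, i.e. it is satisfied by every pair $(\theta,\mathbf{y})$ with $\mathbf{y}\in\mathcal{Y}\cap\{0,1\}^{Z}$, $\theta\in\mathbb{R}_+$ and $\theta\ge\mathcal{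FR}(\mathbf{y})$.
   Context: The PageRank value of $v$ equals the reciprocal of the expected first return time to $v$ (expected number of steps for the PageRank random walk, i.e. the random walk defined by the PageRank/Google matrix with fixed damping and teleportation as in Csáji–Jungers–Blondel, started at $v$ to return to $v$). In particular $\mathcal{FR}(\mathbf{y})\ge 0$ for all $\mathbf{y}$. The optimization problem considered is $\min\{\mathcal{FR}(\mathbf{y}):\mathbf{y}\in\mathcal{Y}\cap\{0,1\}^{Z}\}$, written in epigraph form with a variable $\theta\in\mathbb{R}_+$ satisfying $\theta\ge\mathcal{FR}(\mathbf{y})$. *)

theory Defs
  imports Complex_Main
begin

text \<open>PageRank (Google) matrix with damping c and teleportation distribution z:
  G i j = (1 - c) * P i j + c * z j, where P i j = 1/outdeg i for (i,j) in E',
  and dangling nodes (outdeg 0) jump according to z.\<close>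

definition outdeg :: "nat \<Rightarrow> (nat \<times> nat) set \<Rightarrow> nat \<Rightarrow> nat" where
  "outdeg n E' i = card {j \<in> {1..n}. (i, j) \<in> E'}"

definition linkmat :: "nat \<Rightarrow> (nat \<Rightarrow> real) \<Rightarrow> (nat \<times> nat) set \<Rightarrow> nat \<Rightarrow> nat \<Rightarrow> real" where
  "linkmat n z E' i j =
     (if outdeg n E' i = 0 then z j
      else if (i, j) \<in> E' then 1 / real (outdeg n E' i) else 0)"

definition google :: "nat \<Rightarrow> real \<Rightarrow> (nat \<Rightarrow> real) \<Rightarrow> (nat \<times> nat) set \<Rightarrow> nat \<Rightarrow> nat \<Rightarrow> real" where
  "google n c z E' i j = (1 - c) * linkmat n z E' i j + c * z j"

text \<open>taboo n c z E' v t j: probability that the PageRank walk started at v is at node j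
  at time t without having visited v at any of the times 1..t.\<close>

primrec taboo :: "nat \<Rightarrow> real \<Rightarrow> (nat \<Rightarrow> real) \<Rightarrow> (nat \<times> nat) set \<Rightarrow> nat \<Rightarrow> nat \<Rightarrow> nat \<Rightarrow> real" where
  "taboo n c z E' v 0 j = (if j = v then 1 else 0)"
| "taboo n c z E' v (Suc t) k =
     (if k = v then 0 else (\<Sum>j\<in>{1..n}. taboo n c z E' v t j * google n c z E' j k))"

text \<open>Probability that the first return to v happens at step t+1, and the expected
  first return time to v of the PageRank random walk on the graph ({1..n}, E').\<close>

definition first_return_prob :: "nat \<Rightarrow> real \<Rightarrow> (nat \<Rightarrow> real) \<Rightarrow> (nat \<times> nat) set \<Rightarrow> nat \<Rightarrow> nat \<Rightarrow> real" where
  "first_return_prob n c z E' v t = (\<Sum>j\<in>{1..n}. taboo n c z E' v t j * google n c z E' j v)"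

definition exp_first_return :: "nat \<Rightarrow> real \<Rightarrow> (nat \<Rightarrow> real) \<Rightarrow> (nat \<times> nat) set \<Rightarrow> nat \<Rightarrow> real" where
  "exp_first_return n c z E' v = (\<Sum>t. real (Suc t) * first_return_prob n c z E' v t)"

definition binvecs :: "(nat \<times> nat) set \<Rightarrow> (nat \<times> nat \<Rightarrow> real) set" where
  "binvecs Z = {y. (\<forall>e\<in>Z. y e = 0 \<or> y e = 1) \<and> (\<forall>e. e \<notin> Z \<longrightarrow> y e = 0)}"

definition supp :: "(nat \<times> nat) set \<Rightarrow> (nat \<times> nat \<Rightarrow> real) \<Rightarrow> (nat \<times> nat) set" where
  "supp Z y = {e \<in> Z. y e = 1}"

definition FR :: "nat \<Rightarrow> real \<Rightarrow> (nat \<Rightarrow> real) \<Rightarrow> (nat \<times> nat) set \<Rightarrow> nat \<Rightarrow> (nat \<times> nat) set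
    \<Rightarrow> (nat \<times> nat \<Rightarrow> real) \<Rightarrow> real" where
  "FR n c z E v Z y = exp_first_return n c z (E \<union> supp Z y) v"

definition gamma :: "nat \<Rightarrow> real \<Rightarrow> (nat \<Rightarrow> real) \<Rightarrow> (nat \<times> nat) set \<Rightarrow> nat \<Rightarrow> (nat \<times> nat) set
    \<Rightarrow> (nat \<times> nat) set \<Rightarrow> (nat \<times> nat) set \<Rightarrow> real" where
  "gamma n c z E v Z S N =
     Min {FR n c z E v Z y | y. y \<in> binvecs Z \<and> (\<forall>e\<in>S. y e = 1) \<and> (\<forall>e\<in>N. y e = 0)}"

end

theory Submission
  imports Defs
begin

text \<open>The cut uses nothing about \<open>FR\<close> beyond the fact that it depends only on the support
  of \<open>y\<close>.
  If \<open>y\<close> and \<open>ybar\<close> have the same support, then \<open>FR y = FR ybar\<close> and every correction term is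
  nonpositive. Otherwise they differ at some hidden edge \<open>e\<close>; then \<open>y\<close> is feasible for the
  subproblem defining \<open>gamma {} {e}\<close> (if \<open>e \<in> Ybar\<close>) or \<open>gamma {e} {}\<close> (if not), so the
  correction term at \<open>e\<close> alone is at most \<open>FR y - FR ybar\<close>, and the remaining terms are
  nonpositive.\<close>

lemma sum_le_member_nonpos:
  fixes f :: "'a \<Rightarrow> 'b::ordered_comm_monoid_add"
  assumes "finite A" "i \<in> A" "\<And>x. x \<in> A \<Longrightarrow> f x \<le> 0"
  shows "sum f A \<le> f i"
proof -
  have "sum f (A - {i}) \<le> 0"
    using assms(3) by (intro sum_nonpos) auto
  then have "f i + sum f (A - {i}) \<le> f i + 0"
    by (rule add_left_mono)
  then show ?thesis
    using assms(1,2) by (simp add: sum.remove)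
qed

lemma finite_FR_values:
  assumes "finite Z"
  shows "finite {FR n c z E v Z y | y. y \<in> binvecs Z \<and> (\<forall>e\<in>S. y e = 1) \<and> (\<forall>e\<in>N. y e = 0)}"
proof (rule finite_subset)
  show "{FR n c z E v Z y | y. y \<in> binvecs Z \<and> (\<forall>e\<in>S. y e = 1) \<and> (\<forall>e\<in>N. y e = 0)}
        \<subseteq> (\<lambda>Y. exp_first_return n c z (E \<union> Y) v) ` Pow Z"
    by (auto simp: FR_def supp_def)
  show "finite ((\<lambda>Y. exp_first_return n c z (E \<union> Y) v) ` Pow Z)"
    using assms by simp
qed

lemma gamma_le_FR:
  assumes "finite Z" "y \<in> binvecs Z" "\<forall>e\<in>S. y e = 1" "\<forall>e\<in>N. y e = 0"
  shows "gamma n c z E v Z S N \<le> FR n c z E v Z y"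
  unfolding gamma_def
  by (rule Min_le[OF finite_FR_values[OF assms(1)]]) (use assms in blast)

lemma binvecs_01:
  assumes "y \<in> binvecs Z" "e \<in> Z"
  shows "y e = 0 \<or> y e = 1"
  using assms by (simp add: binvecs_def)

lemma supp_subset: "supp Z y \<subseteq> Z"
  by (auto simp: supp_def)

lemma binvecs_supp_cases:
  assumes "y \<in> binvecs Z" "ybar \<in> binvecs Z"
  obtains "supp Z y = supp Z ybar"
  | e where "e \<in> supp Z ybar" "y e = 0"
  | e where "e \<in> Z - supp Z ybar" "y e = 1"
proof -
  have "supp Z y = supp Z ybar"
    if keep: "\<forall>e\<in>supp Z ybar. y e \<noteq> 0" and off: "\<forall>e\<in>Z - supp Z ybar. y e \<noteq> 1"
  proof (intro set_eqI iffI)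
    fix e
    assume "e \<in> supp Z y"
    then show "e \<in> supp Z ybar" using off by (auto simp: supp_def)
  next
    fix e
    assume e: "e \<in> supp Z ybar"
    with keep have "y e \<noteq> 0" by blast
    with e show "e \<in> supp Z y"
      using binvecs_01[OF assms(1), of e] supp_subset[of Z ybar] by (auto simp: supp_def)
  qed
  then show ?thesis using that by blast
qed

lemma FR_ge_local_branching_cut:
  fixes n v :: nat and c :: real and z :: "nat \<Rightarrow> real" and E :: "(nat \<times> nat) set"
    and ybar y :: "nat \<times> nat \<Rightarrow> real"
  assumes "finite Z" "ybar \<in> binvecs Z" "y \<in> binvecs Z"
  defines "F \<equiv> FR n c z E v Z ybar"
  shows "FR n c z E v Z y \<ge> F
      + (\<Sum>e\<in>supp Z ybar. min 0 (gamma n c z E v Z {} {e} - F) * (1 - y e))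
      + (\<Sum>e\<in>Z - supp Z ybar. min 0 (gamma n c z E v Z {e} {} - F) * y e)"
    (is "_ \<ge> F + sum ?drop ?Y + sum ?add ?N")
proof -
  have fin_Y: "finite ?Y" and fin_N: "finite ?N"
    using assms(1) finite_subset[OF supp_subset] by auto
  have drop_nonpos: "?drop e \<le> 0" if "e \<in> ?Y" for e
  proof -
    have "y e \<le> 1"
      using binvecs_01[OF assms(3) subsetD[OF supp_subset that]] by auto
    then show ?thesis by (simp add: mult_nonpos_nonneg)
  qed
  have add_nonpos: "?add e \<le> 0" if "e \<in> ?N" for e
  proof -
    have "0 \<le> y e"
      using binvecs_01[OF assms(3) DiffD1[OF that]] by auto
    then show ?thesis by (simp add: mult_nonpos_nonneg)
  qed
  have sum_drop: "sum ?drop ?Y \<le> 0" and sum_add: "sum ?add ?N \<le> 0"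
    using drop_nonpos add_nonpos by (auto intro: sum_nonpos)
  from assms(3,2) show ?thesis
  proof (cases rule: binvecs_supp_cases)
    case 1
    then have "FR n c z E v Z y = F" by (simp add: F_def FR_def)
    then show ?thesis using sum_drop sum_add by linarith
  next
    case (2 e)
    have "sum ?drop ?Y \<le> ?drop e"
      using sum_le_member_nonpos[OF fin_Y 2(1) drop_nonpos] .
    moreover have "gamma n c z E v Z {} {e} \<le> FR n c z E v Z y"
      using 2 by (intro gamma_le_FR[OF assms(1,3)]) auto
    moreover have "?drop e = min 0 (gamma n c z E v Z {} {e} - F)"
      using 2(2) by simp
    ultimately show ?thesis using sum_add by linarith
  next
    case (3 e)
    have "sum ?add ?N \<le> ?add e"
      using sum_le_member_nonpos[OF fin_N 3(1) add_nonpos] .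
    moreover have "gamma n c z E v Z {e} {} \<le> FR n c z E v Z y"
      using 3 by (intro gamma_le_FR[OF assms(1,3)]) auto
    moreover have "?add e = min 0 (gamma n c z E v Z {e} {} - F)"
      using 3(2) by simp
    ultimately show ?thesis using sum_drop by linarith
  qed
qed

theorem theorem1:
  fixes n v :: nat and E Z :: "(nat \<times> nat) set" and c :: real and z :: "nat \<Rightarrow> real"
    and Ycal :: "(nat \<times> nat \<Rightarrow> real) set" and ybar y :: "nat \<times> nat \<Rightarrow> real" and \<theta> :: real
  assumes "v \<in> {1..n}"
    and "E \<subseteq> {1..n} \<times> {1..n}"
    and "Z \<subseteq> {1..n} \<times> {1..n}"
    and "Z \<inter> E = {}"
    and "0 < c" and "c < 1"
    and "\<forall>i\<in>{1..n}. 0 < z i" and "(\<Sum>i\<in>{1..n}. z i) = 1"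
    and "Ycal \<inter> binvecs Z \<noteq> {}"
    and "ybar \<in> Ycal \<inter> binvecs Z"
    and "y \<in> Ycal \<inter> binvecs Z"
    and "0 \<le> \<theta>"
    and "\<theta> \<ge> FR n c z E v Z y"
  shows "\<theta> \<ge> FR n c z E v Z ybar
      + (\<Sum>e\<in>supp Z ybar. min 0 (gamma n c z E v Z {} {e} - FR n c z E v Z ybar) * (1 - y e))
      + (\<Sum>e\<in>Z - supp Z ybar. min 0 (gamma n c z E v Z {e} {} - FR n c z E v Z ybar) * y e)"
proof -
  have "finite Z"
    using assms(3) by (rule finite_subset) simp
  moreover have "ybar \<in> binvecs Z" "y \<in> binvecs Z"
    using assms(10,11) by auto
  ultimately show ?thesis
    using order_trans[OF FR_ge_local_branching_cut assms(13)] by blast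
qed

end
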